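(* For every integer $n\geq2$, the $V^{n}$-move is not an unknotting operation on welded knots; that is, there is a welded knot (for instance the trefoil knot) which is not $V^{n}$-equivalent to the unknot.
   Context: A virtual link diagram is the image of an immersion of finitely many ordered, oriented circles in the plane with transverse double points, each a classical crossing (with over/under information) or a virtual crossing. Welded Reidemeister moves are R1–R3, the virtual moves VR1–VR4, and the OC move (a strand passing over two strands at classical crossings may slide across a virtual crossing of those two strands); a welded knot is an equivalence class of one-component diagrams under these moves. The $V^{n}$-move: inside a disk the diagram consists of two arcs $a,b$ oriented in the same direction; on one side they are parallel without crossings; on the other side the tangle is the $2$-braid word $(\sigma\tau)^{n}$, where $\sigma$ is a classical crossing with $b$ over $a$ and $\tau$ a virtual crossing (so $n$ classical crossings, all with $b$ over and of the same sign, alternating with $n$ virtual crossings). Two welded knots are $V^{n}$-equivalent if diagrams are related by $V^n$-moves and welded Reidemeister moves. A local move is an unknotting operation on welded knots if every welded knot is equivalent to the unknot under that move and welded Reidemeister moves. *)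

theory Defs
  imports Main "HOL-Library.Multiset"
begin

text \<open>A one-component virtual knot diagram modulo the virtual moves VR1--VR4 is
encoded by its (signed) Gauss code: reading along the oriented circle from a base
point, each classical crossing is met twice, once as over-passage (O) and once as
under-passage (U); each letter carries the crossing label and the crossing sign
(True = positive).  Virtual crossings leave no trace.  Rotation of the word
(changing the base point) and renaming labels are identities of diagrams.\<close>

datatype letter = Over nat bool | Under nat bool

fun lbl :: "letter \<Rightarrow> nat" where
  "lbl (Over c e) = c" | "lbl (Under c e) = c"

definition labels :: "letter list \<Rightarrow> nat set" where
  "labels xs = lbl ` set xs"

fun relabel :: "(nat \<Rightarrow> nat) \<Rightarrow> letter \<Rightarrow> letter" where
  "relabel f (Over c e) = Over (f c) e" | "relabel f (Under c e) = Under (f c) e"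

definition gauss_wf :: "letter list \<Rightarrow> bool" where
  "gauss_wf K \<longleftrightarrow> (\<forall>c \<in> labels K.
      length (filter (\<lambda>l. \<exists>e. l = Over c e) K) = 1 \<and>
      length (filter (\<lambda>l. \<exists>e. l = Under c e) K) = 1 \<and>
      (\<forall>e e'. Over c e \<in> set K \<longrightarrow> Under c e' \<in> set K \<longrightarrow> e = e'))"

text \<open>Inserting the contents of two disjoint small arcs of the circle (given in
either order along the knot; the arcs may lie in the same gap).\<close>
definition ins2 :: "letter list \<Rightarrow> letter list \<Rightarrow> letter list \<Rightarrow> letter list \<Rightarrow> bool" where
  "ins2 xs s1 s2 ys \<longleftrightarrow> (\<exists>u v w. xs = u @ v @ w \<and>
      (ys = u @ s1 @ v @ s2 @ w \<or> ys = u @ s2 @ v @ s1 @ w))"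

definition rot_step :: "letter list \<Rightarrow> letter list \<Rightarrow> bool" where
  "rot_step xs ys \<longleftrightarrow> ys = rotate1 xs"

definition relabel_step :: "letter list \<Rightarrow> letter list \<Rightarrow> bool" where
  "relabel_step xs ys \<longleftrightarrow> (\<exists>f. inj f \<and> ys = map (relabel f) xs)"

text \<open>R1: creation of a kink (a crossing whose two passages are adjacent), any
order, any sign.\<close>
definition R1_step :: "letter list \<Rightarrow> letter list \<Rightarrow> bool" where
  "R1_step xs ys \<longleftrightarrow> (\<exists>u v c e. xs = u @ v \<and> c \<notin> labels xs \<and>
      (ys = u @ [Over c e, Under c e] @ v \<or> ys = u @ [Under c e, Over c e] @ v))"

text \<open>R2: one arc passes over another twice, creating two crossings of opposite
signs; the two strands may be parallel or antiparallel.\<close>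
definition R2_step :: "letter list \<Rightarrow> letter list \<Rightarrow> bool" where
  "R2_step xs ys \<longleftrightarrow> (\<exists>c1 c2 e. c1 \<noteq> c2 \<and> c1 \<notin> labels xs \<and> c2 \<notin> labels xs \<and>
      (ins2 xs [Over c1 e, Over c2 (\<not> e)] [Under c1 e, Under c2 (\<not> e)] ys \<or>
       ins2 xs [Over c1 e, Over c2 (\<not> e)] [Under c2 (\<not> e), Under c1 e] ys))"

text \<open>R3: three strands T (top), M (middle), B (bottom) pairwise crossing in a
triangle, with crossings x = T over M, y = T over B, z = M over B.  The segments read
T: {Over x, Over y}, M: {Under x, Over z}, B: {Under y, Under z}; the move reverses the order on each of
the three segments.  The orders realised by an actual triangle of oriented strands are
exactly those with  (order on T = order on M) iff sign y = sign z  and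
(order on T = order on B) iff sign x = sign z  (all 16 configurations).\<close>
definition R3_step :: "letter list \<Rightarrow> letter list \<Rightarrow> bool" where
  "R3_step xs ys \<longleftrightarrow> (\<exists>x y z ex ey ez t m b.
      x \<noteq> y \<and> x \<noteq> z \<and> y \<noteq> z \<and>
      (t = m \<longleftrightarrow> ey = ez) \<and> (t = b \<longleftrightarrow> ex = ez) \<and>
      (let T = (if t then [Over x ex, Over y ey] else [Over y ey, Over x ex]);
           M = (if m then [Under x ex, Over z ez] else [Over z ez, Under x ex]);
           B = (if b then [Under y ey, Under z ez] else [Under z ez, Under y ey])
       in \<exists>u v w r p1 p2 p3. {#p1, p2, p3#} = {#T, M, B#} \<and>
            xs = u @ p1 @ v @ p2 @ w @ p3 @ r \<and>
            ys = u @ rev p1 @ v @ rev p2 @ w @ rev p3 @ r))"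

text \<open>OC (forbidden-move-free welded move): two consecutive over-passages of a strand
may be exchanged.\<close>
definition OC_step :: "letter list \<Rightarrow> letter list \<Rightarrow> bool" where
  "OC_step xs ys \<longleftrightarrow> (\<exists>u v c1 e1 c2 e2.
      xs = u @ [Over c1 e1, Over c2 e2] @ v \<and> ys = u @ [Over c2 e2, Over c1 e1] @ v)"

definition welded_step :: "letter list \<Rightarrow> letter list \<Rightarrow> bool" where
  "welded_step xs ys \<longleftrightarrow> rot_step xs ys \<or> relabel_step xs ys \<or> R1_step xs ys \<or>
      R2_step xs ys \<or> R3_step xs ys \<or> OC_step xs ys"

text \<open>The V^n-move: arcs a, b parallel become the tangle (sigma tau)^n; along a one
meets the under-passages of crossings c1..cn, along b their over-passages, in the same
order, all of one sign e.\<close>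
definition Vn_move :: "nat \<Rightarrow> letter list \<Rightarrow> letter list \<Rightarrow> bool" where
  "Vn_move n xs ys \<longleftrightarrow> (\<exists>cs e. length cs = n \<and> distinct cs \<and> set cs \<inter> labels xs = {} \<and>
      ins2 xs (map (\<lambda>c. Under c e) cs) (map (\<lambda>c. Over c e) cs) ys)"

definition equiv_under :: "(letter list \<Rightarrow> letter list \<Rightarrow> bool) \<Rightarrow> letter list \<Rightarrow> letter list \<Rightarrow> bool" where
  "equiv_under M = (symclp (\<lambda>xs ys. welded_step xs ys \<or> M xs ys))\<^sup>*\<^sup>*"

definition Vn_equivalent :: "nat \<Rightarrow> letter list \<Rightarrow> letter list \<Rightarrow> bool" where
  "Vn_equivalent n = equiv_under (Vn_move n)"

definition unknot :: "letter list" where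
  "unknot = []"

definition is_unknotting_operation :: "(letter list \<Rightarrow> letter list \<Rightarrow> bool) \<Rightarrow> bool" where
  "is_unknotting_operation M \<longleftrightarrow> (\<forall>K. gauss_wf K \<longrightarrow> equiv_under M K unknot)"

definition trefoil :: "letter list" where
  "trefoil = [Over 1 True, Under 2 True, Over 3 True, Under 1 True, Over 2 True, Under 3 True]"

end

theory Submission
  imports Defs "HOL-Number_Theory.Cong"
begin

(* Colourings of Gauss codes by a quandle are invariant under the welded Reidemeister moves:
   R1, R2 and R3 are the quandle axioms, and OC only permutes two over-passages, which
   constrain the colour of the strand but do not act on it.  If moreover every right
   translation x |-> x |> b has order dividing n, the n under-passages of a V^n-move act
   trivially, so having a non-monochromatic colouring is a V^n-invariant.  The symplectic
   quandle on (Z/n)^2 modulo sign, a |> b = a + w(a,b) b, is such a quandle because the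
   n-th power of the transvection by b is a + n w(a,b) b.  The trefoil has a non-trivial
   colouring by it, with arcs coloured +-(1,0), +-(0,1), +-(1,1), while the unknot has none. *)

lemma labels_Nil [simp]: "labels [] = {}"
  and labels_Cons [simp]: "labels (l # w) = insert (lbl l) (labels w)"
  and labels_append [simp]: "labels (u @ v) = labels u \<union> labels v"
  by (auto simp: labels_def)

lemma labels_mset: "mset xs = mset ys \<Longrightarrow> labels xs = labels ys"
  unfolding labels_def by (metis set_mset_mset)

lemma labels_relabel: "labels (map (relabel f) xs) = f ` labels xs"
proof -
  have "lbl (relabel f l) = f (lbl l)" for l by (cases l) auto
  then show ?thesis by (auto simp: labels_def image_image)
qed

lemma labels_map_Over [simp]: "labels (map (\<lambda>c. Over c (s c)) cs) = set cs"
  and labels_map_Under [simp]: "labels (map (\<lambda>c. Under c (s c)) cs) = set cs"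
  by (auto simp: labels_def image_image)

lemma letters_notin_labels:
  assumes "c \<notin> labels w"
  shows "Over c e \<notin> set w" "Under c e \<notin> set w"
    "filter (\<lambda>l. \<exists>e. l = Over c e) w = []" "filter (\<lambda>l. \<exists>e. l = Under c e) w = []"
  using assms by (force simp: labels_def filter_empty_conv)+

lemma gauss_wf_mset: "mset xs = mset ys \<Longrightarrow> gauss_wf xs \<longleftrightarrow> gauss_wf ys"
proof -
  assume eq: "mset xs = mset ys"
  then have "length (filter P xs) = length (filter P ys)" for P
    by (metis mset_filter size_mset)
  moreover have "set xs = set ys" using eq by (metis set_mset_mset)
  ultimately show ?thesis using labels_mset[OF eq] unfolding gauss_wf_def by simp
qed

lemma gauss_wf_append_disjoint:
  assumes "labels A \<inter> labels B = {}"
  shows "gauss_wf (A @ B) \<longleftrightarrow> gauss_wf A \<and> gauss_wf B"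
proof -
  have "c \<in> labels A \<Longrightarrow> c \<notin> labels B" "c \<in> labels B \<Longrightarrow> c \<notin> labels A" for c
    using assms by blast+
  then show ?thesis
    unfolding gauss_wf_def using letters_notin_labels by (auto simp: ball_Un)
qed

lemma gauss_wf_insert:
  assumes "mset ys = mset (xs @ S)" "gauss_wf S" "labels S \<inter> labels xs = {}"
  shows "gauss_wf ys \<longleftrightarrow> gauss_wf xs"
  using assms gauss_wf_append_disjoint[of xs S] gauss_wf_mset[OF assms(1)] by blast

lemma gauss_wf_relabel:
  assumes "inj f"
  shows "gauss_wf (map (relabel f) xs) \<longleftrightarrow> gauss_wf xs"
proof -
  have Over: "relabel f l = Over (f c) e \<longleftrightarrow> l = Over c e"
    and Under: "relabel f l = Under (f c) e \<longleftrightarrow> l = Under c e" for l c e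
    using assms by (cases l; auto dest: injD)+
  have "length (filter ((\<lambda>l. \<exists>e. l = Over (f c) e) \<circ> relabel f) xs)
      = length (filter (\<lambda>l. \<exists>e. l = Over c e) xs)"
    "length (filter ((\<lambda>l. \<exists>e. l = Under (f c) e) \<circ> relabel f) xs)
      = length (filter (\<lambda>l. \<exists>e. l = Under c e) xs)" for c
    by (simp_all add: comp_def Over Under)
  moreover have "Over (f c) e \<in> relabel f ` set xs \<longleftrightarrow> Over c e \<in> set xs"
    "Under (f c) e \<in> relabel f ` set xs \<longleftrightarrow> Under c e \<in> set xs" for c e
    using Over Under by (metis image_iff)+
  ultimately show ?thesis unfolding gauss_wf_def labels_relabel by simp
qed

lemma gauss_wf_overs_unders:
  assumes "distinct cs"
  shows "gauss_wf (map (\<lambda>c. Over c (s c)) cs @ map (\<lambda>c. Under c (s c)) cs)"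
proof -
  have "length (filter (\<lambda>x. x = c) cs) = 1" if "c \<in> set cs" for c
  proof -
    have "{x. x = c \<and> x \<in> set cs} = {c}" using that by auto
    then show ?thesis using distinct_length_filter[OF assms, of "\<lambda>x. x = c"] by (simp add: Int_def)
  qed
  then show ?thesis
    unfolding gauss_wf_def by (auto simp: filter_map comp_def)
qed

lemma mset_rotate1: "mset (rotate1 xs) = mset xs"
  by (cases xs) simp_all

lemma ins2_mset: "ins2 xs s1 s2 ys \<Longrightarrow> mset ys = mset (xs @ s1 @ s2)"
  unfolding ins2_def by auto

lemma ins2_commute: "ins2 xs s1 s2 ys \<longleftrightarrow> ins2 xs s2 s1 ys"
  unfolding ins2_def by blast

lemma gauss_wf_R1_step:
  assumes "R1_step xs ys"
  shows "gauss_wf ys \<longleftrightarrow> gauss_wf xs"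
proof -
  obtain u v c e where "xs = u @ v" and c: "c \<notin> labels xs"
    and "ys = u @ [Over c e, Under c e] @ v \<or> ys = u @ [Under c e, Over c e] @ v"
    using assms unfolding R1_step_def by blast
  then have "mset ys = mset (xs @ [Over c e, Under c e])"
    by auto
  moreover have "gauss_wf [Over c e, Under c e]"
    by (simp add: gauss_wf_def)
  ultimately show ?thesis
    using c by (intro gauss_wf_insert) auto
qed

lemma gauss_wf_R2_step:
  assumes "R2_step xs ys"
  shows "gauss_wf ys \<longleftrightarrow> gauss_wf xs"
proof -
  obtain c1 c2 e where c: "c1 \<noteq> c2" "c1 \<notin> labels xs" "c2 \<notin> labels xs"
    and "ins2 xs [Over c1 e, Over c2 (\<not> e)] [Under c1 e, Under c2 (\<not> e)] ys \<or>
      ins2 xs [Over c1 e, Over c2 (\<not> e)] [Under c2 (\<not> e), Under c1 e] ys"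
    using assms unfolding R2_step_def by blast
  then have "mset ys = mset (xs @ [Over c1 e, Over c2 (\<not> e)] @ [Under c1 e, Under c2 (\<not> e)])"
    by (auto dest!: ins2_mset simp: add_mset_commute)
  moreover have "gauss_wf ([Over c1 e, Over c2 (\<not> e)] @ [Under c1 e, Under c2 (\<not> e)])"
    using c(1) by (auto simp: gauss_wf_def)
  ultimately show ?thesis
    using c by (intro gauss_wf_insert) auto
qed

lemma welded_step_gauss_wf:
  assumes "welded_step xs ys"
  shows "gauss_wf ys \<longleftrightarrow> gauss_wf xs"
  using assms unfolding welded_step_def
proof (elim disjE)
  assume "rot_step xs ys"
  then show ?thesis
    unfolding rot_step_def by (metis gauss_wf_mset mset_rotate1)
next
  assume "relabel_step xs ys"
  then show ?thesis
    unfolding relabel_step_def using gauss_wf_relabel by blast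
next
  assume "R1_step xs ys"
  then show ?thesis by (rule gauss_wf_R1_step)
next
  assume "R2_step xs ys"
  then show ?thesis by (rule gauss_wf_R2_step)
next
  assume "R3_step xs ys"
  then have "mset ys = mset xs"
    unfolding R3_step_def Let_def by (elim exE conjE) simp
  then show ?thesis by (rule gauss_wf_mset)
next
  assume "OC_step xs ys"
  then have "mset ys = mset xs"
    unfolding OC_step_def by auto
  then show ?thesis by (rule gauss_wf_mset)
qed

lemma Vn_move_gauss_wf:
  assumes "Vn_move n xs ys"
  shows "gauss_wf ys \<longleftrightarrow> gauss_wf xs"
proof -
  obtain cs e where cs: "distinct cs" "set cs \<inter> labels xs = {}"
    and "mset ys = mset (xs @ map (\<lambda>c. Over c e) cs @ map (\<lambda>c. Under c e) cs)"
    using assms unfolding Vn_move_def by (force dest!: ins2_mset simp: ac_simps)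
  moreover have "gauss_wf (map (\<lambda>c. Over c e) cs @ map (\<lambda>c. Under c e) cs)"
    using gauss_wf_overs_unders[OF cs(1), of "\<lambda>_. e"] .
  ultimately show ?thesis
    by (intro gauss_wf_insert) auto
qed

lemma gauss_wf_crossing_confined:
  assumes "gauss_wf K" "mset K = mset (S @ R)" "Over z e \<in> set S" "Under z e' \<in> set S"
  shows "z \<notin> labels R"
proof
  assume "z \<in> labels R"
  then obtain l where l: "l \<in> set R" "lbl l = z" by (auto simp: labels_def)
  have "z \<in> labels S"
    using assms(3) unfolding labels_def by (metis image_eqI lbl.simps(1))
  then have "z \<in> labels K"
    using labels_mset[OF assms(2)] by simp
  then have counts: "length (filter (\<lambda>l. \<exists>e. l = Over z e) K) = 1"
    "length (filter (\<lambda>l. \<exists>e. l = Under z e) K) = 1"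
    using assms(1) unfolding gauss_wf_def by blast+
  have split: "length (filter P K) = length (filter P S) + length (filter P R)" for P
  proof -
    have "length (filter P K) = length (filter P (S @ R))"
      by (metis assms(2) mset_filter size_mset)
    then show ?thesis by simp
  qed
  have "length (filter (\<lambda>l. \<exists>e. l = Over z e) S) \<noteq> 0"
    "length (filter (\<lambda>l. \<exists>e. l = Under z e) S) \<noteq> 0"
    using assms(3,4) by (auto simp: filter_empty_conv)
  then have "length (filter (\<lambda>l. \<exists>e. l = Over z e) R) = 0"
    "length (filter (\<lambda>l. \<exists>e. l = Under z e) R) = 0"
    using counts split[of "\<lambda>l. \<exists>e. l = Over z e"] split[of "\<lambda>l. \<exists>e. l = Under z e"]
    by linarith+
  then show False
    using l by (cases l) (auto simp: filter_empty_conv)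
qed

lemma gauss_wf_segments_confined:
  assumes wf: "gauss_wf (u @ p1 @ v @ p2 @ w @ p3 @ r)" and segs: "{#p1, p2, p3#} = {#T, M, B#}"
    and "Over z e \<in> set M" "Under z e' \<in> set B"
  shows "z \<notin> labels (u @ v @ w @ r)"
proof -
  have "mset p1 + mset p2 + mset p3 = mset T + mset M + mset B"
    using arg_cong[OF segs, of "\<lambda>P. sum_mset (image_mset mset P)"] by (simp add: ac_simps)
  then have "mset (u @ p1 @ v @ p2 @ w @ p3 @ r) = mset ((M @ B) @ (u @ v @ w @ r @ T))"
    by (simp add: ac_simps)
  then have "z \<notin> labels (u @ v @ w @ r @ T)"
    by (rule gauss_wf_crossing_confined[OF wf]) (use assms(3,4) in auto)
  then show ?thesis
    by simp
qed

section \<open>Colourings by a quandle\<close>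

(* A quandle on the quotient of 'q by \<approx>: act True is the right action and act False its
   inverse, which is what a negative crossing applies. *)
locale setoid_quandle =
  fixes eqv :: "'q \<Rightarrow> 'q \<Rightarrow> bool"  (infix \<open>\<approx>\<close> 50)
    and act :: "bool \<Rightarrow> 'q \<Rightarrow> 'q \<Rightarrow> 'q"
  assumes eqv_refl [simp]: "a \<approx> a"
    and eqv_sym: "a \<approx> b \<Longrightarrow> b \<approx> a"
    and eqv_trans [trans]: "a \<approx> b \<Longrightarrow> b \<approx> c \<Longrightarrow> a \<approx> c"
    and act_cong: "a \<approx> a' \<Longrightarrow> b \<approx> b' \<Longrightarrow> act e a b \<approx> act e a' b'"
    and act_idem: "act e a a \<approx> a"
    and act_inverse: "act (\<not> e) (act e a b) b \<approx> a"
    and act_distrib: "act f (act e a b) c \<approx> act e (act f a c) (act f b c)"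
begin

lemma act_inverse': "act e (act (\<not> e) a b) b \<approx> a"
  using act_inverse[of "\<not> e"] by simp

lemma act_eqv_cancel: "act e c b \<approx> a \<Longrightarrow> b \<approx> a \<Longrightarrow> c \<approx> a"
proof -
  assume "act e c b \<approx> a" "b \<approx> a"
  have "c \<approx> act (\<not> e) (act e c b) b" using act_inverse eqv_sym by blast
  also have "\<dots> \<approx> act (\<not> e) a a" using act_cong \<open>act e c b \<approx> a\<close> \<open>b \<approx> a\<close> by blast
  also have "\<dots> \<approx> a" by (rule act_idem)
  finally show "c \<approx> a" .
qed

(* A colouring of a Gauss code assigns to each crossing c the colour g c of its over-arc.
   Walking along the knot from an arc of colour a, an over-passage at c is admissible only if
   the current colour is g c, and an under-passage at c acts on the current colour by g c. *)

fun run :: "(nat \<Rightarrow> 'q) \<Rightarrow> 'q \<Rightarrow> letter list \<Rightarrow> 'q option" where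
  "run g a [] = Some a"
| "run g a (Over c e # w) = (if a \<approx> g c then run g a w else None)"
| "run g a (Under c e # w) = run g (act e a (g c)) w"

definition colorable :: "letter list \<Rightarrow> bool" where
  "colorable K \<longleftrightarrow> (\<exists>g a b. run g a K = Some b \<and> b \<approx> a \<and> (\<exists>c \<in> labels K. \<not> g c \<approx> a))"

lemma colorableI:
  "run g a K = Some b \<Longrightarrow> b \<approx> a \<Longrightarrow> c \<in> labels K \<Longrightarrow> \<not> g c \<approx> a \<Longrightarrow> colorable K"
  unfolding colorable_def by blast

lemma colorableE:
  assumes "colorable K"
  obtains g a b c where "run g a K = Some b" "b \<approx> a" "c \<in> labels K" "\<not> g c \<approx> a"
  using assms unfolding colorable_def by blast

lemma run_append: "run g a (u @ v) = Option.bind (run g a u) (\<lambda>b. run g b v)"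
  by (induction g a u rule: run.induct) auto

lemma run_append_Some:
  "run g a (u @ v) = Some c \<longleftrightarrow> (\<exists>b. run g a u = Some b \<and> run g b v = Some c)"
  by (simp add: run_append bind_eq_Some_conv)

lemma run_cong: "(\<And>c. c \<in> labels w \<Longrightarrow> g c = g' c) \<Longrightarrow> run g a w = run g' a w"
  by (induction g a w rule: run.induct) auto

lemma run_eqv:
  assumes "run g a w = Some b" "a \<approx> a'"
  shows "\<exists>b'. run g a' w = Some b' \<and> b \<approx> b'"
  using assms
proof (induction g a w arbitrary: a' rule: run.induct)
  case (2 g a c e w)
  then show ?case
    by (metis eqv_sym eqv_trans option.discI run.simps(2))
next
  case (3 g a c e w)
  then show ?case by (simp add: act_cong)
qed simp

lemma run_monochrome:
  assumes "\<forall>c \<in> labels w. g c \<approx> y" "a \<approx> y"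
  shows "\<exists>b. run g a w = Some b \<and> b \<approx> y"
  using assms
proof (induction g a w rule: run.induct)
  case (2 g a c e w)
  then show ?case by (auto intro: eqv_trans eqv_sym)
next
  case (3 g a c e w)
  have "act e a (g c) \<approx> act e y y" using 3 by (simp add: act_cong)
  then have "act e a (g c) \<approx> y" using act_idem eqv_trans by blast
  then show ?case using 3 by simp
qed simp

lemma run_overs:
  assumes "\<forall>l \<in> set w. \<exists>c e. l = Over c e"
  shows "run g a w = (if \<forall>c \<in> labels w. a \<approx> g c then Some a else None)"
  using assms by (induction g a w rule: run.induct) auto

section \<open>Invariance under the welded moves\<close>

lemma colorable_append_swap:
  assumes "colorable (u @ v)"
  shows "colorable (v @ u)"
proof -
  obtain g a b c where run: "run g a (u @ v) = Some b" and "b \<approx> a"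
    and c: "c \<in> labels (u @ v)" "\<not> g c \<approx> a"
    using assms by (rule colorableE)
  then obtain m where u: "run g a u = Some m" and v: "run g m v = Some b"
    by (auto simp: run_append_Some)
  obtain m' where u': "run g b u = Some m'" "m \<approx> m'"
    using run_eqv[OF u] eqv_sym \<open>b \<approx> a\<close> by blast
  have "\<exists>c \<in> labels (v @ u). \<not> g c \<approx> m"
  proof (rule ccontr)
    assume "\<not> ?thesis"
    then have mono: "\<forall>c \<in> labels (v @ u). g c \<approx> m" by blast
    then have "b \<approx> m" using run_monochrome[of v g m m] v by auto
    moreover have "g c \<approx> m" using mono c(1) by auto
    ultimately have "g c \<approx> a" using \<open>b \<approx> a\<close> by (metis eqv_sym eqv_trans)
    with c(2) show False ..
  qed
  moreover have "run g m (v @ u) = Some m'"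
    using v u' by (simp add: run_append)
  ultimately show ?thesis
    using u'(2) eqv_sym colorableI by blast
qed

lemma colorable_append_commute: "colorable (u @ v) \<longleftrightarrow> colorable (v @ u)"
  using colorable_append_swap by blast

lemma colorable_rotate1: "colorable (rotate1 xs) \<longleftrightarrow> colorable xs"
  by (cases xs) (simp_all add: colorable_append_commute[of _ "[_]"])

lemma run_relabel: "run g a (map (relabel f) w) = run (g \<circ> f) a w"
  by (induction "g \<circ> f" a w rule: run.induct) auto

lemma colorable_relabel:
  assumes "inj f"
  shows "colorable (map (relabel f) xs) \<longleftrightarrow> colorable xs"
proof
  assume "colorable (map (relabel f) xs)"
  then obtain g a b c where "run (g \<circ> f) a xs = Some b" "b \<approx> a"
    "c \<in> f ` labels xs" "\<not> g c \<approx> a"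
    by (auto simp: run_relabel labels_relabel elim: colorableE)
  then show "colorable xs"
    by (auto intro: colorableI)
next
  assume "colorable xs"
  then obtain g a b c where "run g a xs = Some b" "b \<approx> a" "c \<in> labels xs" "\<not> g c \<approx> a"
    by (rule colorableE)
  moreover have "(g \<circ> inv f) \<circ> f = g"
    using assms by (simp add: fun_eq_iff)
  ultimately show "colorable (map (relabel f) xs)"
    by (intro colorableI[of "g \<circ> inv f" a _ b "f c"]) (auto simp: run_relabel labels_relabel assms)
qed

lemma colorable_swap_overs:
  "colorable (u @ Over c1 e1 # Over c2 e2 # v) \<longleftrightarrow> colorable (u @ Over c2 e2 # Over c1 e1 # v)"
proof -
  have "run g b (Over c1 e1 # Over c2 e2 # v) = run g b (Over c2 e2 # Over c1 e1 # v)" for g b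
    by auto
  then have "run g a (u @ Over c1 e1 # Over c2 e2 # v) = run g a (u @ Over c2 e2 # Over c1 e1 # v)" for g a
    by (simp only: run_append)
  moreover have "labels (u @ Over c1 e1 # Over c2 e2 # v) = labels (u @ Over c2 e2 # Over c1 e1 # v)"
    by auto
  ultimately show ?thesis
    unfolding colorable_def by simp
qed

definition cancelling :: "letter list \<Rightarrow> bool" where
  "cancelling us \<longleftrightarrow>
    (\<forall>g a y. (\<forall>c \<in> labels us. g c \<approx> y) \<longrightarrow> (\<exists>b. run g a us = Some b \<and> b \<approx> a))"

lemma colorable_insert_cancelling:
  assumes overs: "\<forall>l \<in> set os. \<exists>c e. l = Over c e"
    and fresh: "labels os \<inter> labels (p @ q) = {}"
    and us: "labels us \<subseteq> labels os" "cancelling us"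
    and col: "colorable (p @ q)"
  shows "colorable (os @ p @ us @ q)"
proof -
  obtain g a b c where run: "run g a (p @ q) = Some b" and "b \<approx> a"
    and c: "c \<in> labels (p @ q)" "\<not> g c \<approx> a"
    using col by (rule colorableE)
  then obtain m where p: "run g a p = Some m" and q: "run g m q = Some b"
    by (auto simp: run_append_Some)
  define g' where "g' d = (if d \<in> labels os then a else g d)" for d
  have same: "run g' x w = run g x w" if "labels w \<subseteq> labels (p @ q)" for x w
    using that fresh by (intro run_cong) (auto simp: g'_def)
  have "run g' a os = Some a"
    using overs by (simp add: run_overs g'_def)
  moreover have "run g' a p = Some m"
    using p same[of p] by simp
  moreover obtain m' where "run g' m us = Some m'" "m' \<approx> m"
    using us unfolding cancelling_def by (metis g'_def subsetD eqv_refl)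
  moreover obtain b' where "run g' m' q = Some b'" "b \<approx> b'"
    using run_eqv[OF q, of m'] same[of q] \<open>m' \<approx> m\<close> eqv_sym by auto
  ultimately have "run g' a (os @ p @ us @ q) = Some b'"
    by (simp add: run_append)
  moreover have "b' \<approx> a" using \<open>b \<approx> b'\<close> \<open>b \<approx> a\<close> by (metis eqv_sym eqv_trans)
  moreover have "g' c = g c" using c(1) fresh by (auto simp: g'_def)
  ultimately show ?thesis
    using c by (intro colorableI[of g' a _ b' c]) auto
qed

lemma colorable_remove_cancelling:
  assumes overs: "\<forall>l \<in> set os. \<exists>c e. l = Over c e"
    and us: "labels us \<subseteq> labels os" "cancelling us"
    and col: "colorable (os @ p @ us @ q)"
  shows "colorable (p @ q)"
proof -
  obtain g a b c where run: "run g a (os @ p @ us @ q) = Some b" and "b \<approx> a"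
    and c: "c \<in> labels (os @ p @ us @ q)" "\<not> g c \<approx> a"
    using col by (rule colorableE)
  then obtain a' m m' where os: "run g a os = Some a'" and p: "run g a' p = Some m"
    and "run g m us = Some m'" and q: "run g m' q = Some b"
    by (auto simp: run_append_Some)
  have "a' = a" and os_colors: "\<forall>d \<in> labels os. g d \<approx> a"
    using os overs by (auto simp: run_overs eqv_sym split: if_splits)
  then have "\<forall>d \<in> labels us. g d \<approx> a"
    using us(1) by blast
  then obtain m'' where "run g m us = Some m''" "m'' \<approx> m"
    using us(2) unfolding cancelling_def by blast
  then have "m' \<approx> m"
    using \<open>run g m us = Some m'\<close> by simp
  then obtain b' where "run g m q = Some b'" "b \<approx> b'"
    using run_eqv[OF q, of m] by blast
  then have "run g a (p @ q) = Some b'" "b' \<approx> a"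
    using p \<open>a' = a\<close> \<open>b \<approx> a\<close> by (auto simp: run_append intro: eqv_sym eqv_trans)
  moreover have "c \<in> labels (p @ q)"
    using c os_colors us(1) by auto
  ultimately show ?thesis
    using c(2) by (rule colorableI)
qed

lemma colorable_ins2_cancelling:
  assumes ins: "ins2 xs os us ys"
    and overs: "\<forall>l \<in> set os. \<exists>c e. l = Over c e"
    and fresh: "labels os \<inter> labels xs = {}"
    and us: "labels us \<subseteq> labels os" "cancelling us"
  shows "colorable ys \<longleftrightarrow> colorable xs"
proof -
  have insert: "colorable (os @ p @ us @ q) \<longleftrightarrow> colorable (p @ q)"
    if "labels (p @ q) = labels xs" for p q
    using that overs fresh us colorable_insert_cancelling colorable_remove_cancelling by metis
  obtain u v w where xs: "xs = u @ v @ w"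
    and ys: "ys = u @ os @ v @ us @ w \<or> ys = u @ us @ v @ os @ w"
    using ins unfolding ins2_def by blast
  \<comment> \<open>a rotation brings both insertion patterns into the form os @ p @ us @ q\<close>
  have "colorable (u @ os @ v @ us @ w) \<longleftrightarrow> colorable (os @ v @ us @ w @ u)"
    using colorable_append_commute[of u] by simp
  also have "\<dots> \<longleftrightarrow> colorable (v @ w @ u)"
    using insert[of v "w @ u"] xs by auto
  also have "\<dots> \<longleftrightarrow> colorable xs"
    using colorable_append_commute[of u] xs by simp
  finally have A: "colorable (u @ os @ v @ us @ w) \<longleftrightarrow> colorable xs" .
  have "colorable (u @ us @ v @ os @ w) \<longleftrightarrow> colorable (os @ (w @ u) @ us @ v)"
    using colorable_append_commute[of "u @ us @ v"] by simp
  also have "\<dots> \<longleftrightarrow> colorable ((w @ u) @ v)"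
    using insert[of "w @ u" v] xs by auto
  also have "\<dots> \<longleftrightarrow> colorable xs"
    using colorable_append_commute[of w] xs by simp
  finally show ?thesis
    using A ys by blast
qed

lemma cancelling_inverse_pair: "cancelling [Under c e, Under d (\<not> e)]"
  unfolding cancelling_def
proof (intro allI impI)
  fix g a y
  assume "\<forall>c' \<in> labels [Under c e, Under d (\<not> e)]. g c' \<approx> y"
  then have "act (\<not> e) (act e a (g c)) (g d) \<approx> act (\<not> e) (act e a y) y"
    by (simp add: act_cong)
  then have "act (\<not> e) (act e a (g c)) (g d) \<approx> a"
    using act_inverse eqv_trans by blast
  then show "\<exists>b. run g a [Under c e, Under d (\<not> e)] = Some b \<and> b \<approx> a"
    by simp
qed

lemma colorable_R2:
  assumes "R2_step xs ys"
  shows "colorable ys \<longleftrightarrow> colorable xs"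
proof -
  obtain c1 c2 e where fresh: "c1 \<notin> labels xs" "c2 \<notin> labels xs" and
    ins: "ins2 xs [Over c1 e, Over c2 (\<not> e)] [Under c1 e, Under c2 (\<not> e)] ys \<or>
      ins2 xs [Over c1 e, Over c2 (\<not> e)] [Under c2 (\<not> e), Under c1 e] ys"
    using assms unfolding R2_step_def by blast
  have "cancelling [Under c1 e, Under c2 (\<not> e)]" "cancelling [Under c2 (\<not> e), Under c1 e]"
    using cancelling_inverse_pair[of c2 "\<not> e" c1] cancelling_inverse_pair by simp_all
  with ins fresh show ?thesis
    by (auto elim!: colorable_ins2_cancelling[THEN iffD1] colorable_ins2_cancelling[THEN iffD2])
qed

lemma run_kink:
  assumes "S = [Over c e, Under c e] \<or> S = [Under c e, Over c e]"
  shows "run g a S \<noteq> None \<longleftrightarrow> a \<approx> g c"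
    and "run g a S = Some b \<Longrightarrow> b \<approx> a"
proof -
  have idem: "act e a (g c) \<approx> g c" if "a \<approx> g c"
    using act_cong[OF that eqv_refl, of e "g c"] act_idem eqv_trans by blast
  show admissible: "run g a S \<noteq> None \<longleftrightarrow> a \<approx> g c"
    using assms act_eqv_cancel[of e a "g c" "g c"] idem by (auto split: if_splits)
  show "b \<approx> a" if "run g a S = Some b"
  proof -
    have "a \<approx> g c" using that admissible by simp
    moreover have "b = act e a (g c)" using assms that by (auto split: if_splits)
    ultimately show ?thesis using idem by (metis eqv_sym eqv_trans)
  qed
qed

lemma colorable_insert_kink:
  assumes S: "S = [Over c e, Under c e] \<or> S = [Under c e, Over c e]"
    and fresh: "c \<notin> labels w"
  shows "colorable (S @ w) \<longleftrightarrow> colorable w"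
proof
  assume "colorable (S @ w)"
  then obtain g a b c0 where run: "run g a (S @ w) = Some b" "b \<approx> a"
    and c0: "c0 \<in> labels (S @ w)" "\<not> g c0 \<approx> a"
    by (rule colorableE)
  then obtain a' where "run g a S = Some a'" and w: "run g a' w = Some b"
    by (auto simp: run_append_Some)
  then have "a \<approx> g c" "a' \<approx> a"
    using run_kink[OF S] by auto
  have "c0 \<noteq> c"
    using c0(2) \<open>a \<approx> g c\<close> eqv_sym by blast
  then have "c0 \<in> labels w"
    using c0(1) S by auto
  moreover obtain b' where "run g a w = Some b'" "b \<approx> b'"
    using run_eqv[OF w, of a] \<open>a' \<approx> a\<close> eqv_sym by blast
  ultimately show "colorable w"
    using run(2) c0(2) by (blast intro: colorableI eqv_sym eqv_trans)
next
  assume "colorable w"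
  then obtain g a b c0 where run: "run g a w = Some b" "b \<approx> a"
    and c0: "c0 \<in> labels w" "\<not> g c0 \<approx> a"
    by (rule colorableE)
  define g' where "g' = g(c := a)"
  obtain a' where S_run: "run g' a S = Some a'" "a' \<approx> a"
    using run_kink[OF S, of g' a] by (auto simp: g'_def)
  moreover have "run g' x w = run g x w" for x
    using fresh by (intro run_cong) (auto simp: g'_def)
  moreover obtain b' where "run g a' w = Some b'" "b \<approx> b'"
    using run_eqv[OF run(1), of a'] S_run(2) eqv_sym by blast
  ultimately have "run g' a (S @ w) = Some b'"
    by (simp add: run_append)
  moreover have "g' c0 = g c0" "c0 \<in> labels (S @ w)"
    using c0 fresh by (auto simp: g'_def)
  ultimately show "colorable (S @ w)"
    using run(2) \<open>b \<approx> b'\<close> c0(2) by (metis colorableI eqv_sym eqv_trans)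
qed

lemma colorable_R1:
  assumes "R1_step xs ys"
  shows "colorable ys \<longleftrightarrow> colorable xs"
proof -
  obtain u v c e S where xs: "xs = u @ v" and fresh: "c \<notin> labels xs" and ys: "ys = u @ S @ v"
    and S: "S = [Over c e, Under c e] \<or> S = [Under c e, Over c e]"
    using assms unfolding R1_step_def by blast
  have "colorable (u @ S @ v) \<longleftrightarrow> colorable (S @ v @ u)"
    using colorable_append_commute[of u] by simp
  also have "\<dots> \<longleftrightarrow> colorable (v @ u)"
    using colorable_insert_kink[OF S] fresh xs by simp
  also have "\<dots> \<longleftrightarrow> colorable (u @ v)"
    by (rule colorable_append_commute)
  finally show ?thesis
    using xs ys by simp
qed

definition simulates :: "(nat \<Rightarrow> 'q) \<Rightarrow> (nat \<Rightarrow> 'q) \<Rightarrow> letter list \<Rightarrow> letter list \<Rightarrow> bool" where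
  "simulates g g' w w' \<longleftrightarrow>
    (\<forall>a a' b. run g a w = Some b \<longrightarrow> a \<approx> a' \<longrightarrow> (\<exists>b'. run g' a' w' = Some b' \<and> b \<approx> b'))"

lemma simulatesI:
  assumes "\<And>a b. run g a w = Some b \<Longrightarrow> \<exists>b'. run g' a w' = Some b' \<and> b \<approx> b'"
  shows "simulates g g' w w'"
  unfolding simulates_def
proof (intro allI impI)
  fix a a' b
  assume "run g a w = Some b" "a \<approx> a'"
  then obtain b' where "run g' a w' = Some b'" "b \<approx> b'"
    using assms by blast
  then show "\<exists>b''. run g' a' w' = Some b'' \<and> b \<approx> b''"
    using run_eqv \<open>a \<approx> a'\<close> eqv_trans by blast
qed

lemma simulates_same:
  assumes "\<And>c. c \<in> labels w \<Longrightarrow> g c = g' c"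
  shows "simulates g g' w w"
proof (rule simulatesI)
  fix a b
  assume "run g a w = Some b"
  then show "\<exists>b'. run g' a w = Some b' \<and> b \<approx> b'"
    using run_cong[of w g g' a] assms by simp
qed

lemma simulates_append:
  assumes "simulates g g' u u'" "simulates g g' v v'"
  shows "simulates g g' (u @ v) (u' @ v')"
  unfolding simulates_def
proof (intro allI impI)
  fix a a' c
  assume "run g a (u @ v) = Some c" "a \<approx> a'"
  then obtain b where "run g a u = Some b" "run g b v = Some c"
    by (auto simp: run_append_Some)
  then obtain b' c' where "run g' a' u' = Some b'" "b \<approx> b'" "run g' b' v' = Some c'" "c \<approx> c'"
    using assms \<open>a \<approx> a'\<close> unfolding simulates_def by meson
  then show "\<exists>c'. run g' a' (u' @ v') = Some c' \<and> c \<approx> c'"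
    by (auto simp: run_append)
qed

lemma simulates_R3_top:
  assumes "g' x = g x" "g' y = g y"
    and T: "T = (if t then [Over x ex, Over y ey] else [Over y ey, Over x ex])"
  shows "simulates g g' T (rev T)"
proof (rule simulatesI)
  fix a b
  assume "run g a T = Some b"
  then show "\<exists>b'. run g' a (rev T) = Some b' \<and> b \<approx> b'"
    using assms by (cases t) (auto split: if_splits)
qed

lemma simulates_R3_middle:
  assumes gx: "g' x = g x" and gz: "g' z = act (if m then \<not> ex else ex) (g z) (g x)"
    and M: "M = (if m then [Under x ex, Over z ez] else [Over z ez, Under x ex])"
  shows "simulates g g' M (rev M)"
proof (rule simulatesI)
  fix a b
  assume run: "run g a M = Some b"
  show "\<exists>b'. run g' a (rev M) = Some b' \<and> b \<approx> b'"
  proof (cases m)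
    case True
    then have "act ex a (g x) \<approx> g z" "b = act ex a (g x)"
      using run by (auto simp: M split: if_splits)
    moreover have "a \<approx> act (\<not> ex) (act ex a (g x)) (g x)"
      using act_inverse eqv_sym by blast
    ultimately have "a \<approx> g' z"
      using True gz act_cong eqv_trans by fastforce
    then show ?thesis
      using True gx \<open>b = act ex a (g x)\<close> by (simp add: M)
  next
    case False
    then have "a \<approx> g z" "b = act ex a (g x)"
      using run by (auto simp: M split: if_splits)
    then have "act ex a (g x) \<approx> g' z"
      using False gz act_cong by simp
    then show ?thesis
      using False gx \<open>b = act ex a (g x)\<close> by (simp add: M)
  qed
qed

lemma simulates_R3_bottom:
  assumes "g x \<approx> g y" and gy: "g' y = g y"
    and gz: "g' z = act (if b then \<not> ey else ey) (g z) (g x)"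
    and B: "B = (if b then [Under y ey, Under z ez] else [Under z ez, Under y ey])"
  shows "simulates g g' B (rev B)"
proof (rule simulatesI)
  fix a d
  assume run: "run g a B = Some d"
  have gz_y: "g' z \<approx> act (if b then \<not> ey else ey) (g z) (g y)"
    using gz act_cong \<open>g x \<approx> g y\<close> by simp
  show "\<exists>d'. run g' a (rev B) = Some d' \<and> d \<approx> d'"
  proof (cases b)
    case True
    have "act ey (g' z) (g y) \<approx> act ey (act (\<not> ey) (g z) (g y)) (g y)"
      using True gz_y act_cong by simp
    then have "act ey (g' z) (g y) \<approx> g z"
      using act_inverse' eqv_trans by blast
    then have "act ez (act ey a (g y)) (act ey (g' z) (g y)) \<approx> act ez (act ey a (g y)) (g z)"
      using act_cong by simp
    then have "act ey (act ez a (g' z)) (g y) \<approx> act ez (act ey a (g y)) (g z)"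
      using act_distrib eqv_trans by blast
    then show ?thesis
      using True run gy by (auto simp: B intro: eqv_sym)
  next
    case False
    have "act ey (act ez a (g z)) (g y) \<approx> act ez (act ey a (g y)) (act ey (g z) (g y))"
      by (rule act_distrib)
    also have "\<dots> \<approx> act ez (act ey a (g y)) (g' z)"
      using False gz_y act_cong eqv_sym by simp
    finally show ?thesis
      using False run gy by (auto simp: B)
  qed
qed

lemma labels_rev [simp]: "labels (rev w) = labels w"
  by (simp add: labels_def)

lemma recolour_nontrivial:
  assumes "x \<in> L" "c0 \<in> L" "\<not> g c0 \<approx> a" "x \<noteq> z"
  shows "\<exists>c \<in> L. \<not> (g(z := act e (g z) (g x))) c \<approx> a"
proof (cases "c0 = z")
  case False
  then show ?thesis using assms(2,3) by force
next
  case True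
  then have "\<not> (act e (g z) (g x) \<approx> a \<and> g x \<approx> a)"
    using act_eqv_cancel assms(3) by blast
  then show ?thesis
    using assms(1,2,4) True by force
qed

(* Reversing the three segments only changes the colour of the over-arc at z, where the
   middle strand crosses over the bottom one; the sign conditions of R3 say exactly that the
   middle and the bottom strand require the same new colour there. *)
lemma simulates_R3:
  assumes distinct: "x \<noteq> z" "y \<noteq> z"
    and signs: "(t = m) = (ey = ez)" "(t = b) = (ex = ez)"
    and T: "T = (if t then [Over x ex, Over y ey] else [Over y ey, Over x ex])"
    and M: "M = (if m then [Under x ex, Over z ez] else [Over z ez, Under x ex])"
    and B: "B = (if b then [Under y ey, Under z ez] else [Under z ez, Under y ey])"
    and segs: "{#p1, p2, p3#} = {#T, M, B#}"
    and "g x \<approx> g y"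
    and fresh: "z \<notin> labels (u @ v @ w @ r)"
    and g': "g' = g(z := act (if m then \<not> ex else ex) (g z) (g x))"
  shows "simulates g g' (u @ p1 @ v @ p2 @ w @ p3 @ r) (u @ rev p1 @ v @ rev p2 @ w @ rev p3 @ r)"
proof -
  have gx: "g' x = g x" and gy: "g' y = g y" and gz_m: "g' z = act (if m then \<not> ex else ex) (g z) (g x)"
    using distinct by (simp_all add: g')
  moreover have "(if m then \<not> ex else ex) = (if b then \<not> ey else ey)"
    using signs by auto
  ultimately have gz_b: "g' z = act (if b then \<not> ey else ey) (g z) (g x)"
    by simp
  have sim: "simulates g g' p (rev p)" if "p \<in> {T, M, B}" for p
    using that simulates_R3_top[OF gx gy T] simulates_R3_middle[OF gx gz_m M]
      simulates_R3_bottom[OF \<open>g x \<approx> g y\<close> gy gz_b B]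
    by blast
  have "{p1, p2, p3} = {T, M, B}"
    using arg_cong[OF segs, of set_mset] by simp
  then have "p1 \<in> {T, M, B}" "p2 \<in> {T, M, B}" "p3 \<in> {T, M, B}"
    by blast+
  moreover have "simulates g g' q q" if "z \<notin> labels q" for q
    using that by (intro simulates_same) (auto simp: g')
  ultimately show ?thesis
    using fresh by (intro simulates_append sim) auto
qed

lemma colorable_R3_segments:
  assumes distinct: "x \<noteq> z" "y \<noteq> z"
    and signs: "(t = m) = (ey = ez)" "(t = b) = (ex = ez)"
    and T: "T = (if t then [Over x ex, Over y ey] else [Over y ey, Over x ex])"
    and M: "M = (if m then [Under x ex, Over z ez] else [Over z ez, Under x ex])"
    and B: "B = (if b then [Under y ey, Under z ez] else [Under z ez, Under y ey])"
    and segs: "{#p1, p2, p3#} = {#T, M, B#}"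
    and wf: "gauss_wf (u @ p1 @ v @ p2 @ w @ p3 @ r)"
    and col: "colorable (u @ p1 @ v @ p2 @ w @ p3 @ r)"
  shows "colorable (u @ rev p1 @ v @ rev p2 @ w @ rev p3 @ r)"
proof -
  let ?xs = "u @ p1 @ v @ p2 @ w @ p3 @ r" and ?ys = "u @ rev p1 @ v @ rev p2 @ w @ rev p3 @ r"
  obtain g a c c0 where run: "run g a ?xs = Some c" "c \<approx> a"
    and c0: "c0 \<in> labels ?xs" "\<not> g c0 \<approx> a"
    using col by (rule colorableE)
  have T_seg: "T \<in> {p1, p2, p3}"
    using arg_cong[OF segs, of set_mset] by simp
  moreover have "\<exists>a' d. run g a' p = Some d" if "p \<in> {p1, p2, p3}" for p
    using run(1) that by (auto simp: run_append_Some)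
  ultimately obtain a' d where "run g a' T = Some d"
    by blast
  then have "g x \<approx> g y"
    using T by (cases t) (auto split: if_splits intro: eqv_sym eqv_trans)
  moreover have "z \<notin> labels (u @ v @ w @ r)"
    by (rule gauss_wf_segments_confined[OF wf segs, of z ez ez]) (simp_all add: M B)
  moreover define g' where "g' = g(z := act (if m then \<not> ex else ex) (g z) (g x))"
  ultimately have "simulates g g' ?xs ?ys"
    by (rule simulates_R3[OF distinct signs T M B segs])
  then obtain c' where run': "run g' a ?ys = Some c'" "c \<approx> c'"
    using run(1) eqv_refl unfolding simulates_def by blast
  have "x \<in> labels T"
    by (simp add: T)
  with T_seg have "x \<in> labels ?xs"
    by (auto simp del: insert_iff)
  have "\<exists>c1 \<in> labels ?xs. \<not> g' c1 \<approx> a"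
    unfolding g'_def using \<open>x \<in> labels ?xs\<close> c0 distinct(1) by (rule recolour_nontrivial)
  then obtain c1 where "c1 \<in> labels ?ys" "\<not> g' c1 \<approx> a"
    by (metis labels_rev labels_append)
  moreover have "c' \<approx> a"
    using run'(2) run(2) eqv_sym eqv_trans by blast
  ultimately show ?thesis
    using run'(1) colorableI by blast
qed

lemma colorable_R3_step:
  assumes "R3_step xs ys" "gauss_wf xs" "gauss_wf ys"
  shows "colorable ys \<longleftrightarrow> colorable xs"
proof -
  obtain x y z ex ey ez t m b u v w r p1 p2 p3 T M B where
    distinct: "x \<noteq> z" "y \<noteq> z" and signs: "(t = m) = (ey = ez)" "(t = b) = (ex = ez)"
    and T: "T = (if t then [Over x ex, Over y ey] else [Over y ey, Over x ex])"
    and M: "M = (if m then [Under x ex, Over z ez] else [Over z ez, Under x ex])"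
    and B: "B = (if b then [Under y ey, Under z ez] else [Under z ez, Under y ey])"
    and segs: "{#p1, p2, p3#} = {#T, M, B#}"
    and xs: "xs = u @ p1 @ v @ p2 @ w @ p3 @ r"
    and ys: "ys = u @ rev p1 @ v @ rev p2 @ w @ rev p3 @ r"
    using assms(1) unfolding R3_step_def Let_def
    by (elim exE conjE) (rule that[OF _ _ _ _ refl refl refl], assumption+)
  have "{#rev p1, rev p2, rev p3#} = {#rev T, rev M, rev B#}"
    using arg_cong[OF segs, of "image_mset rev"] by simp
  moreover have "rev T = (if \<not> t then [Over x ex, Over y ey] else [Over y ey, Over x ex])"
    "rev M = (if \<not> m then [Under x ex, Over z ez] else [Over z ez, Under x ex])"
    "rev B = (if \<not> b then [Under y ey, Under z ez] else [Under z ez, Under y ey])"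
    by (simp_all add: T M B)
  ultimately have "colorable ys \<Longrightarrow> colorable xs"
    using colorable_R3_segments[of x z y "\<not> t" "\<not> m" ey ez "\<not> b" ex "rev T" "rev M" "rev B"
        "rev p1" "rev p2" "rev p3" u v w r] distinct signs assms(3)
    by (simp add: xs ys)
  moreover have "colorable xs \<Longrightarrow> colorable ys"
    using colorable_R3_segments[OF distinct signs T M B segs] assms(2) by (simp add: xs ys)
  ultimately show ?thesis by blast
qed

lemma colorable_welded_step:
  assumes "welded_step xs ys" "gauss_wf xs"
  shows "colorable ys \<longleftrightarrow> colorable xs"
  using assms(1) unfolding welded_step_def
proof (elim disjE)
  assume "rot_step xs ys"
  then show ?thesis
    unfolding rot_step_def by (simp add: colorable_rotate1)
next
  assume "relabel_step xs ys"
  then show ?thesis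
    unfolding relabel_step_def using colorable_relabel by blast
next
  assume "R1_step xs ys"
  then show ?thesis by (rule colorable_R1)
next
  assume "R2_step xs ys"
  then show ?thesis by (rule colorable_R2)
next
  assume "R3_step xs ys"
  moreover have "gauss_wf ys"
    using assms welded_step_gauss_wf by blast
  ultimately show ?thesis
    using assms(2) colorable_R3_step by blast
next
  assume "OC_step xs ys"
  then show ?thesis
    unfolding OC_step_def using colorable_swap_overs by auto
qed

lemma funpow_act_cong: "a \<approx> a' \<Longrightarrow> ((\<lambda>x. act e x b) ^^ k) a \<approx> ((\<lambda>x. act e x b) ^^ k) a'"
  by (induction k) (auto intro: act_cong)

lemma run_unders:
  assumes "\<forall>c \<in> set cs. g c \<approx> y"
  shows "\<exists>b. run g a (map (\<lambda>c. Under c e) cs) = Some b \<and> b \<approx> ((\<lambda>x. act e x y) ^^ length cs) a"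
  using assms
proof (induction cs arbitrary: a)
  case (Cons c cs)
  then obtain b where run: "run g (act e a (g c)) (map (\<lambda>c. Under c e) cs) = Some b"
    and IH: "b \<approx> ((\<lambda>x. act e x y) ^^ length cs) (act e a (g c))"
    by auto
  note IH
  also have "((\<lambda>x. act e x y) ^^ length cs) (act e a (g c)) \<approx> ((\<lambda>x. act e x y) ^^ length cs) (act e a y)"
    using Cons.prems by (simp add: act_cong funpow_act_cong)
  also have "\<dots> = ((\<lambda>x. act e x y) ^^ length (c # cs)) a"
    by (simp only: length_Cons funpow_Suc_right comp_apply)
  finally show ?case
    using run by simp
qed simp

lemma not_colorable_Nil: "\<not> colorable []"
  by (simp add: colorable_def)

end

section \<open>The V^n-move\<close>

locale setoid_n_quandle = setoid_quandle +
  fixes n :: nat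
  assumes act_funpow_n: "((\<lambda>x. act e x b) ^^ n) a \<approx> a"
begin

lemma cancelling_unders:
  assumes "length cs = n"
  shows "cancelling (map (\<lambda>c. Under c e) cs)"
  unfolding cancelling_def
proof (intro allI impI)
  fix g a y
  assume "\<forall>c \<in> labels (map (\<lambda>c. Under c e) cs). g c \<approx> y"
  then obtain b where "run g a (map (\<lambda>c. Under c e) cs) = Some b" "b \<approx> ((\<lambda>x. act e x y) ^^ n) a"
    using run_unders[of cs g y a e] assms by auto
  then show "\<exists>b. run g a (map (\<lambda>c. Under c e) cs) = Some b \<and> b \<approx> a"
    using act_funpow_n eqv_trans by blast
qed

lemma colorable_Vn_move:
  assumes "Vn_move n xs ys"
  shows "colorable ys \<longleftrightarrow> colorable xs"
proof -
  obtain cs e where "length cs = n" "set cs \<inter> labels xs = {}"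
    and "ins2 xs (map (\<lambda>c. Under c e) cs) (map (\<lambda>c. Over c e) cs) ys"
    using assms unfolding Vn_move_def by blast
  then show ?thesis
    using cancelling_unders by (intro colorable_ins2_cancelling) (auto simp: ins2_commute)
qed

lemma gauss_wf_colorable_step:
  assumes "welded_step xs ys \<or> Vn_move n xs ys"
  shows "gauss_wf ys \<and> colorable ys \<longleftrightarrow> gauss_wf xs \<and> colorable xs"
  using assms welded_step_gauss_wf colorable_welded_step Vn_move_gauss_wf colorable_Vn_move
  by blast

lemma Vn_equivalent_colorable:
  assumes "Vn_equivalent n K K'" "gauss_wf K" "colorable K"
  shows "colorable K'"
proof -
  have "gauss_wf K' \<and> colorable K'"
    using assms(1) unfolding Vn_equivalent_def equiv_under_def
  proof (induction rule: rtranclp_induct)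
    case (step xs ys)
    then show ?case
      using gauss_wf_colorable_step unfolding symclp_def by blast
  qed (use assms(2,3) in simp)
  then show ?thesis ..
qed

end

section \<open>The symplectic quandle modulo n\<close>

definition symp_form :: "int \<times> int \<Rightarrow> int \<times> int \<Rightarrow> int" where
  "symp_form a b = fst a * snd b - snd a * fst b"

definition transvection :: "int \<Rightarrow> int \<times> int \<Rightarrow> int \<times> int \<Rightarrow> int \<times> int" where
  "transvection k a b = (fst a + k * symp_form a b * fst b, snd a + k * symp_form a b * snd b)"

definition symp_act :: "bool \<Rightarrow> int \<times> int \<Rightarrow> int \<times> int \<Rightarrow> int \<times> int" where
  "symp_act e = transvection (if e then 1 else -1)"

definition cong_pm :: "int \<Rightarrow> int \<times> int \<Rightarrow> int \<times> int \<Rightarrow> bool" where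
  "cong_pm n a b \<longleftrightarrow> (\<exists>s \<in> {1, -1}. [fst a = s * fst b] (mod n) \<and> [snd a = s * snd b] (mod n))"

lemma transvection_zero: "transvection 0 a b = a"
  by (simp add: transvection_def)

lemma transvection_self: "transvection k a a = a"
  by (simp add: transvection_def symp_form_def mult.commute)

lemma transvection_add: "transvection k (transvection l a b) b = transvection (l + k) a b"
  unfolding transvection_def symp_form_def prod_eq_iff fst_conv snd_conv by algebra

lemma transvection_distrib:
  "transvection k (transvection l a b) c = transvection l (transvection k a c) (transvection k b c)"
  unfolding transvection_def symp_form_def prod_eq_iff fst_conv snd_conv by algebra

lemma funpow_transvection: "((\<lambda>x. transvection k x b) ^^ m) a = transvection (int m * k) a b"
proof (induction m)
  case 0
  then show ?case by (simp add: transvection_zero)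
next
  case (Suc m)
  then show ?case by (simp add: transvection_add algebra_simps)
qed

lemma cong_sign_sym:
  assumes "s \<in> {1, -1}" "[x = s * y] (mod n)"
  shows "[y = s * x] (mod (n :: int))"
proof -
  have "[s * x = s * (s * y)] (mod n)"
    using assms(2) by (rule cong_scalar_left)
  moreover have "s * (s * y) = y"
    using assms(1) by auto
  ultimately show ?thesis
    by (simp add: cong_sym)
qed

lemma cong_sign_trans:
  assumes "[x = s * y] (mod n)" "[y = t * z] (mod n)"
  shows "[x = (s * t) * z] (mod (n :: int))"
proof -
  have "[s * y = s * (t * z)] (mod n)"
    using assms(2) by (rule cong_scalar_left)
  then show ?thesis
    using assms(1) cong_trans by (simp add: mult.assoc)
qed

lemma cong_pm_transvection:
  assumes "cong_pm n a a'" "cong_pm n b b'"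
  shows "cong_pm n (transvection k a b) (transvection k a' b')"
proof -
  obtain s t where st: "s \<in> {1, -1}" "t \<in> {1, -1}"
    and a: "[fst a = s * fst a'] (mod n)" "[snd a = s * snd a'] (mod n)"
    and b: "[fst b = t * fst b'] (mod n)" "[snd b = t * snd b'] (mod n)"
    using assms unfolding cong_pm_def by blast
  have form: "[symp_form a b = s * t * symp_form a' b'] (mod n)"
  proof -
    have "[symp_form a b = (s * fst a') * (t * snd b') - (s * snd a') * (t * fst b')] (mod n)"
      unfolding symp_form_def using a b by (intro cong_diff cong_mult)
    then show ?thesis
      by (simp add: symp_form_def algebra_simps)
  qed
  have component: "[x + k * symp_form a b * y = s * (x' + k * symp_form a' b' * y')] (mod n)"
    if "[x = s * x'] (mod n)" "[y = t * y'] (mod n)" for x y x' y'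
  proof -
    have "t * t = 1"
      using st by auto
    have "[x + k * symp_form a b * y = s * x' + k * (s * t * symp_form a' b') * (t * y')] (mod n)"
      using that form by (intro cong_add cong_mult cong_refl)
    also have "s * x' + k * (s * t * symp_form a' b') * (t * y') = s * (x' + k * symp_form a' b' * y')"
      using \<open>t * t = 1\<close> by algebra
    finally show ?thesis .
  qed
  show ?thesis
    unfolding cong_pm_def transvection_def using st(1) a b component by auto
qed

lemma cong_pm_transvection_multiple: "cong_pm n (transvection (n * k) a b) a"
proof -
  have "[x + n * (k * symp_form a b * y) = x + 0] (mod n)" for x y
    by (intro cong_add cong_refl) (simp add: cong_def)
  then have "[x + n * k * symp_form a b * y = 1 * x] (mod n)" for x y
    by (simp add: mult.assoc)
  then show ?thesis
    unfolding cong_pm_def transvection_def by auto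
qed

lemma cong_pm_refl: "cong_pm n a a"
  unfolding cong_pm_def by (rule bexI[of _ 1]) auto

lemma cong_pm_sym: "cong_pm n a b \<Longrightarrow> cong_pm n b a"
  unfolding cong_pm_def using cong_sign_sym by blast

lemma cong_pm_trans:
  assumes "cong_pm n a b" "cong_pm n b c"
  shows "cong_pm n a c"
proof -
  obtain s t where "s \<in> {1, -1}" "t \<in> {1, -1}"
    "[fst a = s * fst b] (mod n)" "[snd a = s * snd b] (mod n)"
    "[fst b = t * fst c] (mod n)" "[snd b = t * snd c] (mod n)"
    using assms unfolding cong_pm_def by blast
  then show ?thesis
    unfolding cong_pm_def by (intro bexI[of _ "s * t"]) (auto intro: cong_sign_trans)
qed

lemma symp_act_inverse: "symp_act (\<not> e) (symp_act e a b) b = a"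
  by (cases e) (simp_all add: symp_act_def transvection_add transvection_zero)

lemma symp_act_distrib: "symp_act f (symp_act e a b) c = symp_act e (symp_act f a c) (symp_act f b c)"
  unfolding symp_act_def by (rule transvection_distrib)

lemma symp_act_funpow: "cong_pm (int n) (((\<lambda>x. symp_act e x b) ^^ n) a) a"
  unfolding symp_act_def funpow_transvection
  using cong_pm_transvection_multiple[of "int n" 1] cong_pm_transvection_multiple[of "int n" "-1"]
  by simp

lemma symplectic_n_quandle: "setoid_n_quandle (cong_pm (int n)) symp_act n"
proof unfold_locales
  fix a b c a' b' :: "int \<times> int" and e f :: bool
  show "cong_pm (int n) a a"
    by (rule cong_pm_refl)
  show "cong_pm (int n) b a" if "cong_pm (int n) a b"
    using that by (rule cong_pm_sym)
  show "cong_pm (int n) a c" if "cong_pm (int n) a b" "cong_pm (int n) b c"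
    using that by (rule cong_pm_trans)
  show "cong_pm (int n) (symp_act e a b) (symp_act e a' b')"
    if "cong_pm (int n) a a'" "cong_pm (int n) b b'"
    unfolding symp_act_def using that by (rule cong_pm_transvection)
  show "cong_pm (int n) (symp_act e a a) a"
    unfolding symp_act_def transvection_self by (rule cong_pm_refl)
  show "cong_pm (int n) (symp_act (\<not> e) (symp_act e a b) b) a"
    unfolding symp_act_inverse by (rule cong_pm_refl)
  show "cong_pm (int n) (symp_act f (symp_act e a b) c) (symp_act e (symp_act f a c) (symp_act f b c))"
    unfolding symp_act_distrib[of f e a b c] by (rule cong_pm_refl)
qed (rule symp_act_funpow)

interpretation symplectic: setoid_n_quandle "cong_pm (int n)" symp_act n for n
  by (rule symplectic_n_quandle)

lemma trefoil_gauss_wf: "gauss_wf trefoil"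
  by (simp add: gauss_wf_def trefoil_def labels_def ex_bool_eq)

lemma trefoil_colorable:
  assumes "2 \<le> n"
  shows "symplectic.colorable n trefoil"
proof -
  define g :: "nat \<Rightarrow> int \<times> int"
    where "g c = (if c = 1 then (1, 0) else if c = 2 then (0, 1) else (1, 1))" for c
  \<comment> \<open>the walk returns to the base colour only up to sign, hence colours modulo \<plusminus>1\<close>
  have "symplectic.run n g (1, 0) trefoil = Some (-1, 0)"
    by (simp add: trefoil_def g_def symp_act_def transvection_def symp_form_def)
  moreover have "cong_pm (int n) (-1, 0) (1, 0)"
    unfolding cong_pm_def by (intro bexI[of _ "-1"]) auto
  moreover have "\<not> cong_pm (int n) (g 2) (1, 0)"
    using assms by (auto simp: cong_pm_def g_def cong_def)
  ultimately show ?thesis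
    by (intro symplectic.colorableI) (auto simp: trefoil_def)
qed

theorem proposition5p2:
  fixes n :: nat
  assumes "n \<ge> 2"
  shows "\<not> is_unknotting_operation (Vn_move n) \<and> \<not> Vn_equivalent n trefoil unknot"
proof -
  have "\<not> Vn_equivalent n trefoil unknot"
    using symplectic.Vn_equivalent_colorable trefoil_gauss_wf trefoil_colorable[OF assms]
      symplectic.not_colorable_Nil unfolding unknot_def by blast
  then show ?thesis
    using trefoil_gauss_wf unfolding is_unknotting_operation_def Vn_equivalent_def by blast
qed

end
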